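(* For any fixed $m$, any fixed $k<m$ and any fixed $\vec p\in(0,1)^m$, $$\Pr_{P\sim(\pi_{\vec p})^n}\big(\mathrm{top}_k(\vec p)\subseteq\mathrm{EJR{+}}(P)\big)=1-\exp(-\Omega(n)).$$
   Context: $\mathcal A=[m]$, $\mathcal A_k$ the $k$-subsets. Approval profile $P=(A_1,\dots,A_n)$, $A_j\subseteq\mathcal A$, drawn i.i.d. from $\pi_{\vec p}$, where $\Pr_{\pi_{\vec p}}(A)=\prod_{i\in A}p_i\prod_{i\notin A}(1-p_i)$. $\mathrm{top}_k(\vec p)$ is the set of $W\in\mathcal A_k$ with $p_i\ge p_j$ for all $i\in W$, $j\notin W$. $W\in\mathcal A_k$ is in $\mathrm{EJR{+}}(P)$ iff there are no $a\in\mathcal A\setminus W$, integer $\ell\ge1$ and set of voters $N'\subseteq[n]$ with $|N'|\ge\ell n/k$ such that every $j\in N'$ has $a\in A_j$ and $|A_j\cap W|<\ell$. Asymptotics as $n\to\infty$. *)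

theory Defs
  imports Complex_Main "HOL-Library.FuncSet"
begin

text \<open>Alternatives are {1..m}; voters are {0..<n}; a profile is a function
  from voters to approval sets.\<close>

definition alts :: "nat \<Rightarrow> nat set" where
  "alts m = {1..m}"

definition approval_prob :: "nat \<Rightarrow> (nat \<Rightarrow> real) \<Rightarrow> nat set \<Rightarrow> real" where
  "approval_prob m p X = (\<Prod>i\<in>alts m. if i \<in> X then p i else 1 - p i)"

definition top_k :: "nat \<Rightarrow> nat \<Rightarrow> (nat \<Rightarrow> real) \<Rightarrow> nat set set" where
  "top_k m k p = {W. W \<subseteq> alts m \<and> card W = k \<and>
      (\<forall>i\<in>W. \<forall>j\<in>alts m - W. p i \<ge> p j)}"

definition EJR_plus :: "nat \<Rightarrow> nat \<Rightarrow> nat \<Rightarrow> (nat \<Rightarrow> nat set) \<Rightarrow> nat set set" where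
  "EJR_plus m k n P = {W. W \<subseteq> alts m \<and> card W = k \<and>
      \<not> (\<exists>a\<in>alts m - W. \<exists>l::nat. l \<ge> 1 \<and> (\<exists>N' \<subseteq> {0..<n}.
            real (card N') \<ge> real l * real n / real k \<and>
            (\<forall>j\<in>N'. a \<in> P j \<and> card (P j \<inter> W) < l)))}"

definition prob_top_in_EJR :: "nat \<Rightarrow> nat \<Rightarrow> (nat \<Rightarrow> real) \<Rightarrow> nat \<Rightarrow> real" where
  "prob_top_in_EJR m k p n =
     (\<Sum>P\<in>{P \<in> PiE {0..<n} (\<lambda>_. Pow (alts m)). top_k m k p \<subseteq> EJR_plus m k n P}.
        \<Prod>j<n. approval_prob m p (P j))"

end

theory Submission
  imports Defs
begin

text \<open>Fix W in top_k(p), a candidate a outside W and a level 1 \<le> l \<le> k. A random ballot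
  approves a while containing fewer than l members of W with probability
  p_a Pr(|A \<inter> W| < l), and this is strictly less than l/k: as p_a \<le> p_i for all i in W,
  k times it is at most the expected number of i in A \<inter> W with |A \<inter> W| - 1 < l, which
  never exceeds l and is 0 with positive probability (when A \<inter> W is empty). An EJR+
  violation of W needs at least l n / k such ballots among the n i.i.d. voters, an event of
  exponentially small probability by a Chernoff bound. A union bound over the finitely many
  triples (W, a, l) concludes.\<close>

definition pi_weight :: "'a set \<Rightarrow> ('a \<Rightarrow> real) \<Rightarrow> 'a set \<Rightarrow> real" where
  "pi_weight I p B = (\<Prod>i\<in>I. if i \<in> B then p i else 1 - p i)"

definition pi_expect :: "'a set \<Rightarrow> ('a \<Rightarrow> real) \<Rightarrow> ('a set \<Rightarrow> real) \<Rightarrow> real" where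
  "pi_expect I p f = (\<Sum>B\<in>Pow I. pi_weight I p B * f B)"

lemma pi_weight_nonneg: "\<forall>i\<in>I. 0 \<le> p i \<and> p i \<le> 1 \<Longrightarrow> 0 \<le> pi_weight I p B"
  unfolding pi_weight_def by (rule prod_nonneg) auto

lemma pi_weight_empty_pos: "\<forall>i\<in>I. p i < 1 \<Longrightarrow> 0 < pi_weight I p {}"
  unfolding pi_weight_def by (rule prod_pos) auto

lemma pi_expect_insert:
  assumes "finite J" "i \<notin> J"
  shows "pi_expect (insert i J) p f =
    (\<Sum>B\<in>Pow J. pi_weight J p B * (p i * f (insert i B) + (1 - p i) * f B))"
proof -
  have inj: "inj_on (insert i) (Pow J)"
    using assms(2) unfolding inj_on_def by (metis Diff_insert_absorb PowD in_mono)
  have weight_out: "pi_weight (insert i J) p B = (1 - p i) * pi_weight J p B" if "B \<in> Pow J" for B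
    unfolding pi_weight_def using assms that by auto
  have weight_in: "pi_weight (insert i J) p (insert i B) = p i * pi_weight J p B" if "B \<in> Pow J" for B
    unfolding pi_weight_def using assms that by (auto intro!: prod.cong)
  have "pi_expect (insert i J) p f = (\<Sum>B\<in>Pow J. pi_weight (insert i J) p B * f B) +
      (\<Sum>B\<in>insert i ` Pow J. pi_weight (insert i J) p B * f B)"
    unfolding pi_expect_def Pow_insert using assms by (intro sum.union_disjoint) auto
  also have "\<dots> = (\<Sum>B\<in>Pow J. pi_weight J p B * ((1 - p i) * f B)) +
      (\<Sum>B\<in>Pow J. pi_weight J p B * (p i * f (insert i B)))"
    using inj weight_in weight_out by (simp add: sum.reindex mult_ac)
  finally show ?thesis by (simp add: sum.distrib[symmetric] algebra_simps)
qed

lemma pi_expect_const: "finite I \<Longrightarrow> pi_expect I p (\<lambda>_. c) = c"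
proof (induction I rule: finite_induct)
  case empty
  then show ?case by (simp add: pi_expect_def pi_weight_def)
next
  case (insert i J)
  then have "pi_expect (insert i J) p (\<lambda>_. c) = (\<Sum>B\<in>Pow J. pi_weight J p B * c)"
    by (simp add: pi_expect_insert algebra_simps)
  then show ?case using insert.IH by (simp add: pi_expect_def)
qed

lemma sum_pi_weight: "finite I \<Longrightarrow> (\<Sum>B\<in>Pow I. pi_weight I p B) = 1"
  using pi_expect_const[of I p 1] by (simp add: pi_expect_def)

lemma pi_expect_cong: "(\<And>B. B \<subseteq> I \<Longrightarrow> f B = g B) \<Longrightarrow> pi_expect I p f = pi_expect I p g"
  unfolding pi_expect_def by (intro sum.cong) auto

lemma pi_expect_mono:
  "\<forall>i\<in>I. 0 \<le> p i \<and> p i \<le> 1 \<Longrightarrow> (\<And>B. B \<subseteq> I \<Longrightarrow> f B \<le> g B) \<Longrightarrow>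
    pi_expect I p f \<le> pi_expect I p g"
  unfolding pi_expect_def by (intro sum_mono mult_left_mono) (auto intro: pi_weight_nonneg)

lemma pi_expect_strict_mono:
  assumes "finite I" "\<forall>i\<in>I. 0 \<le> p i \<and> p i < 1"
    and "\<And>B. B \<subseteq> I \<Longrightarrow> f B \<le> g B" "f {} < g {}"
  shows "pi_expect I p f < pi_expect I p g"
  unfolding pi_expect_def using assms pi_weight_empty_pos[of I p]
  by (intro sum_strict_mono_ex1)
    (auto intro!: mult_left_mono pi_weight_nonneg bexI[of _ "{}"])

lemma pi_expect_sum: "pi_expect I p (\<lambda>B. \<Sum>i\<in>W. f i B) = (\<Sum>i\<in>W. pi_expect I p (f i))"
  unfolding pi_expect_def by (simp add: sum_distrib_left sum.swap[of _ W])

lemma pi_expect_member: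
  assumes "finite I" "i \<in> I"
  shows "pi_expect I p (\<lambda>A. if i \<in> A then g (A - {i}) else 0) = p i * pi_expect I p (\<lambda>A. g (A - {i}))"
proof -
  obtain J where J: "I = insert i J" "i \<notin> J" "finite J"
    using assms by (metis finite_insert mk_disjoint_insert)
  have "insert i B - {i} = B" "B - {i} = B" if "B \<in> Pow J" for B
    using that J(2) by auto
  then show ?thesis
    unfolding J(1) pi_expect_insert[OF J(3,2)] sum_distrib_left
    by (intro sum.cong) (auto simp: algebra_simps)
qed

lemma pi_expect_indicator:
  assumes "finite I"
  shows "pi_expect I p (\<lambda>A. of_bool (A \<in> S)) = (\<Sum>A\<in>{A\<in>Pow I. A \<in> S}. pi_weight I p A)"
proof -
  have "pi_expect I p (\<lambda>A. of_bool (A \<in> S)) = (\<Sum>A\<in>Pow I. if A \<in> S then pi_weight I p A else 0)"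
    unfolding pi_expect_def by (intro sum.cong) auto
  also have "\<dots> = (\<Sum>A\<in>{A\<in>Pow I. A \<in> S}. pi_weight I p A)"
    using assms by (intro sum.inter_filter[symmetric]) simp
  finally show ?thesis .
qed

lemma sum_card_Diff_singleton_less_le:
  assumes "finite W"
  shows "(\<Sum>i\<in>W. if i \<in> B then of_bool (card ((B - {i}) \<inter> W) < l) else 0) \<le> real l"
proof -
  define c where "c = card (B \<inter> W)"
  have "card ((B - {i}) \<inter> W) = c - 1" if "i \<in> B \<inter> W" for i
  proof -
    have "(B - {i}) \<inter> W = (B \<inter> W) - {i}" by auto
    then show ?thesis using that assms by (simp add: c_def)
  qed
  then have "(\<Sum>i\<in>W. if i \<in> B then of_bool (card ((B - {i}) \<inter> W) < l) else 0) =
      (\<Sum>i\<in>B \<inter> W. of_bool (c - 1 < l) :: real)"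
    using assms by (simp add: sum.If_cases Int_commute)
  also have "\<dots> = real c * of_bool (c - 1 < l)"
    by (simp add: c_def)
  also have "\<dots> \<le> real l"
    by (cases "c = 0") auto
  finally show ?thesis .
qed

definition blocking_ballots :: "'a set \<Rightarrow> 'a \<Rightarrow> nat \<Rightarrow> 'a set set" where
  "blocking_ballots W a l = {A. a \<in> A \<and> card (A \<inter> W) < l}"

lemma pi_expect_blocking_ballots_less:
  assumes fin: "finite I" and WI: "W \<subseteq> I" and a: "a \<in> I - W"
    and p: "\<forall>i\<in>I. 0 \<le> p i \<and> p i < 1" and pa: "\<forall>i\<in>W. p a \<le> p i"
    and cW: "card W = k" and "0 < k" "1 \<le> l"
  shows "pi_expect I p (\<lambda>A. of_bool (A \<in> blocking_ballots W a l)) < real l / real k"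
proof -
  have p': "\<forall>i\<in>I. 0 \<le> p i \<and> p i \<le> 1" using p by auto
  have finW: "finite W" using fin WI finite_subset by blast
  define h :: "'a set \<Rightarrow> real" where "h A = of_bool (card (A \<inter> W) < l)" for A
  have h_remove: "h (A - {i}) = h A" if "i \<notin> W" for A i
  proof -
    have "(A - {i}) \<inter> W = A \<inter> W" using that by auto
    then show ?thesis by (simp add: h_def)
  qed
  have h_antimono: "h A \<le> h (A - {i})" for A i
  proof -
    have "card ((A - {i}) \<inter> W) \<le> card (A \<inter> W)" using finW by (intro card_mono) auto
    then show ?thesis by (simp add: h_def)
  qed
  have Eh_nonneg: "0 \<le> pi_expect I p h"
    using pi_expect_mono[OF p', of "\<lambda>_. 0" h] pi_expect_const[OF fin] by (simp add: h_def)
  have "pi_expect I p (\<lambda>A. of_bool (A \<in> blocking_ballots W a l)) =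
      pi_expect I p (\<lambda>A. if a \<in> A then h (A - {a}) else 0)"
    using a h_remove by (intro pi_expect_cong) (simp add: blocking_ballots_def h_def)
  also have "\<dots> = p a * pi_expect I p h"
    using pi_expect_member[OF fin, of a p] a h_remove by simp
  finally have blocking_eq: "pi_expect I p (\<lambda>A. of_bool (A \<in> blocking_ballots W a l)) =
      p a * pi_expect I p h" .
  have "real k * (p a * pi_expect I p h) = (\<Sum>i\<in>W. p a * pi_expect I p h)"
    using cW by simp
  also have "\<dots> \<le> (\<Sum>i\<in>W. p i * pi_expect I p (\<lambda>A. h (A - {i})))"
  proof (intro sum_mono mult_mono)
    fix i assume "i \<in> W"
    then show "p a \<le> p i" using pa by blast
    show "pi_expect I p h \<le> pi_expect I p (\<lambda>A. h (A - {i}))"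
      using h_antimono by (intro pi_expect_mono[OF p'])
  qed (use WI a p Eh_nonneg in auto)
  also have "\<dots> = pi_expect I p (\<lambda>A. \<Sum>i\<in>W. if i \<in> A then h (A - {i}) else 0)"
    unfolding pi_expect_sum using pi_expect_member[OF fin] WI by (intro sum.cong) auto
  also have "\<dots> < pi_expect I p (\<lambda>_. real l)"
  proof (rule pi_expect_strict_mono)
    show "(\<Sum>i\<in>W. if i \<in> B then h (B - {i}) else 0) \<le> real l" for B
      unfolding h_def by (rule sum_card_Diff_singleton_less_le[OF finW])
  qed (use fin p \<open>1 \<le> l\<close> in auto)
  also have "\<dots> = real l"
    using pi_expect_const[OF fin] .
  finally show ?thesis
    using blocking_eq \<open>0 < k\<close> by (simp add: field_simps)
qed

definition iid_prob :: "('a \<Rightarrow> real) \<Rightarrow> nat \<Rightarrow> (nat \<Rightarrow> 'a) set \<Rightarrow> real" where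
  "iid_prob w n E = (\<Sum>P\<in>E. \<Prod>j<n. w (P j))"

definition tail_event :: "'a set \<Rightarrow> 'a set \<Rightarrow> real \<Rightarrow> nat \<Rightarrow> (nat \<Rightarrow> 'a) set" where
  "tail_event X S t n =
     {P \<in> PiE {..<n} (\<lambda>_. X). t * real n \<le> real (card {j\<in>{..<n}. P j \<in> S})}"

lemma iid_prob_PiE: "finite X \<Longrightarrow> iid_prob w n (PiE {..<n} (\<lambda>_. X)) = (\<Sum>x\<in>X. w x) ^ n"
  using prod_sum_PiE[of "{..<n}" "\<lambda>_. X" "\<lambda>_. w"] by (simp add: iid_prob_def)

lemma iid_prob_tail_event_le:
  assumes fin: "finite X" and w: "\<forall>x\<in>X. 0 \<le> w x" and b: "1 \<le> b"
  shows "iid_prob w n (tail_event X S t n) \<le>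
    ((\<Sum>x\<in>X. w x * (if x \<in> S then b else 1)) / b powr t) ^ n"
proof -
  define g where "g x = w x * (if x \<in> S then b else 1)" for x
  have g_nonneg: "0 \<le> g x" if "x \<in> X" for x using w b that by (simp add: g_def)
  have markov: "(\<Prod>j<n. w (P j)) \<le> (\<Prod>j<n. g (P j)) / b powr (t * n)"
    if P: "P \<in> tail_event X S t n" for P
  proof -
    define c where "c = card {j\<in>{..<n}. P j \<in> S}"
    have "(\<Prod>j<n. g (P j)) = (\<Prod>j<n. w (P j)) * (\<Prod>j<n. if P j \<in> S then b else 1)"
      unfolding g_def by (simp add: prod.distrib)
    also have "(\<Prod>j<n. if P j \<in> S then b else 1) = b ^ c"
      unfolding c_def by (simp add: prod.If_cases Int_def)
    finally have g_prod: "(\<Prod>j<n. g (P j)) = (\<Prod>j<n. w (P j)) * b ^ c" .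
    have "b powr (t * n) \<le> b powr (real c)"
      using P b unfolding tail_event_def c_def by (intro powr_mono) (auto simp: mult.commute)
    also have "\<dots> = b ^ c" using b by (simp add: powr_realpow)
    finally have "(\<Prod>j<n. w (P j)) * b powr (t * n) \<le> (\<Prod>j<n. w (P j)) * b ^ c"
      using P w by (intro mult_left_mono prod_nonneg) (auto simp: tail_event_def PiE_iff)
    then show ?thesis using b g_prod by (simp add: field_simps)
  qed
  have "iid_prob w n (tail_event X S t n) \<le> (\<Sum>P\<in>tail_event X S t n. (\<Prod>j<n. g (P j)) / b powr (t * n))"
    unfolding iid_prob_def using markov by (rule sum_mono)
  also have "\<dots> \<le> (\<Sum>P\<in>PiE {..<n} (\<lambda>_. X). (\<Prod>j<n. g (P j)) / b powr (t * n))"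
  proof (rule sum_mono2)
    show "tail_event X S t n \<subseteq> PiE {..<n} (\<lambda>_. X)" by (auto simp: tail_event_def)
  qed (use fin g_nonneg in \<open>auto intro!: finite_PiE divide_nonneg_nonneg prod_nonneg\<close>)
  also have "\<dots> = (\<Sum>x\<in>X. g x) ^ n / (b powr t) ^ n"
    using iid_prob_PiE[OF fin, of g n] b
    by (simp add: iid_prob_def sum_divide_distrib[symmetric] powr_powr[symmetric] powr_realpow)
  finally show ?thesis by (simp add: g_def power_divide)
qed

lemma exists_tilt_powr_gt:
  fixes q t :: real
  assumes "0 \<le> q" "q < t"
  shows "\<exists>b>1. 1 + (b - 1) * q < b powr t"
proof -
  \<comment> \<open>Any b > 1 with b q < t works, because b powr t \<ge> 1 + t ln b \<ge> 1 + t (1 - 1/b).\<close>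
  define b where "b = 2 * t / (q + t)"
  have b: "1 < b" "q * b < t" unfolding b_def using assms by (simp_all add: field_simps)
  have "1 - 1 / b \<le> ln b"
    using ln_le_minus_one[of "1 / b"] b by (simp add: ln_div)
  then have "1 + t * (1 - 1 / b) \<le> 1 + t * ln b"
    using assms by (intro add_left_mono mult_left_mono) auto
  also have "\<dots> \<le> b powr t"
    using exp_ge_add_one_self[of "t * ln b"] b by (simp add: powr_def)
  finally have "1 + t * (1 - 1 / b) \<le> b powr t" .
  moreover have "(b - 1) * q < t * (1 - 1 / b)"
  proof -
    have "(b - 1) * q < (b - 1) * (t / b)"
      using b by (intro mult_strict_left_mono) (auto simp: field_simps)
    then show ?thesis using b by (simp add: field_simps)
  qed
  ultimately show ?thesis using b by (intro exI[of _ b]) auto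
qed

lemma iid_prob_tail_event_exponential:
  assumes fin: "finite X" and w: "\<forall>x\<in>X. 0 \<le> w x" and total: "(\<Sum>x\<in>X. w x) = 1"
    and q_less: "(\<Sum>x\<in>{x\<in>X. x \<in> S}. w x) < t"
  shows "\<exists>r. 0 \<le> r \<and> r < 1 \<and> (\<forall>n. iid_prob w n (tail_event X S t n) \<le> r ^ n)"
proof -
  define q where "q = (\<Sum>x\<in>{x\<in>X. x \<in> S}. w x)"
  have "0 \<le> q" unfolding q_def using w by (intro sum_nonneg) auto
  then obtain b where b: "1 < b" "1 + (b - 1) * q < b powr t"
    using exists_tilt_powr_gt q_less q_def by blast
  have "(\<Sum>x\<in>X. w x * (if x \<in> S then b else 1)) = (\<Sum>x\<in>X. w x + (b - 1) * (if x \<in> S then w x else 0))"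
    by (intro sum.cong) (auto simp: algebra_simps)
  also have "\<dots> = 1 + (b - 1) * q"
    using fin by (simp add: sum.distrib total q_def sum_distrib_left[symmetric] sum.inter_filter)
  finally have tilted: "(\<Sum>x\<in>X. w x * (if x \<in> S then b else 1)) = 1 + (b - 1) * q" .
  define r where "r = (1 + (b - 1) * q) / b powr t"
  have "0 < 1 + (b - 1) * q" using b \<open>0 \<le> q\<close> by (simp add: add_pos_nonneg)
  then have "0 \<le> r" "r < 1" using b by (auto simp: r_def field_simps)
  moreover have "iid_prob w n (tail_event X S t n) \<le> r ^ n" for n
    using iid_prob_tail_event_le[OF fin w, where b=b and S=S and t=t and n=n] b tilted by (simp add: r_def)
  ultimately show ?thesis by blast
qed

lemma sum_UN_le:
  fixes f :: "'a \<Rightarrow> 'b::ordered_comm_monoid_add"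
  assumes "finite T" "\<And>\<tau>. \<tau> \<in> T \<Longrightarrow> finite (E \<tau>)"
    and "\<And>x. x \<in> (\<Union>\<tau>\<in>T. E \<tau>) \<Longrightarrow> 0 \<le> f x"
  shows "sum f (\<Union>\<tau>\<in>T. E \<tau>) \<le> (\<Sum>\<tau>\<in>T. sum f (E \<tau>))"
  using assms
proof (induction T rule: finite_induct)
  case empty
  then show ?case by simp
next
  case (insert \<sigma> T)
  let ?U = "\<Union>\<tau>\<in>T. E \<tau>"
  have fin: "finite (E \<sigma>)" "finite ?U" using insert.prems(1) insert.hyps(1) by auto
  have "sum f (E \<sigma> \<union> ?U) \<le> sum f (E \<sigma> \<union> ?U) + sum f (E \<sigma> \<inter> ?U)"
    using insert.prems(2) by (intro add_increasing2 sum_nonneg order_refl) auto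
  also have "\<dots> = sum f (E \<sigma>) + sum f ?U"
    using fin by (rule sum.union_inter)
  also have "\<dots> \<le> sum f (E \<sigma>) + (\<Sum>\<tau>\<in>T. sum f (E \<tau>))"
    using insert by (intro add_left_mono insert.IH) auto
  finally show ?case using insert.hyps by simp
qed

lemma finite_uniform_geometric_bound:
  fixes f :: "'b \<Rightarrow> nat \<Rightarrow> real"
  assumes "finite T" "\<forall>\<tau>\<in>T. \<exists>r. 0 \<le> r \<and> r < 1 \<and> (\<forall>n. f \<tau> n \<le> r ^ n)"
  shows "\<exists>r. 0 \<le> r \<and> r < 1 \<and> (\<forall>\<tau>\<in>T. \<forall>n. f \<tau> n \<le> r ^ n)"
proof -
  obtain R where R: "\<forall>\<tau>\<in>T. 0 \<le> R \<tau> \<and> R \<tau> < 1 \<and> (\<forall>n. f \<tau> n \<le> R \<tau> ^ n)"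
    using bchoice[OF assms(2)] by blast
  define r where "r = Max (insert 0 (R ` T))"
  have "R \<tau> \<le> r" if "\<tau> \<in> T" for \<tau> unfolding r_def using assms(1) that by simp
  then have "f \<tau> n \<le> r ^ n" if "\<tau> \<in> T" for \<tau> n
    using R that by (meson order_trans power_mono)
  moreover have "0 \<le> r" "r < 1" unfolding r_def using assms(1) R by auto
  ultimately show ?thesis by blast
qed

lemma geometric_le_exp_eventually:
  fixes r C :: real
  assumes "0 \<le> r" "r < 1"
  shows "\<exists>c>0. \<forall>\<^sub>F n in sequentially. C * r ^ n \<le> exp (- c * real n)"
proof -
  define s where "s = (1 + r) / 2"
  have s: "0 < s" "s < 1" "r < s" using assms by (auto simp: s_def)
  have "(\<lambda>n. C * (r / s) ^ n) \<longlonglongrightarrow> C * 0"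
    using assms s by (intro tendsto_mult tendsto_const LIMSEQ_power_zero) auto
  then have "\<forall>\<^sub>F n in sequentially. C * (r / s) ^ n < 1"
    by (intro order_tendstoD) auto
  then have "\<forall>\<^sub>F n in sequentially. C * r ^ n \<le> exp (- (- ln s) * real n)"
  proof eventually_elim
    case (elim n)
    have "C * r ^ n = C * (r / s) ^ n * s ^ n" using s by (simp add: power_divide)
    also have "\<dots> \<le> 1 * s ^ n" using elim s by (intro mult_right_mono) auto
    also have "\<dots> = exp (- (- ln s) * real n)"
      using s exp_of_nat_mult[of n "ln s"] by (simp add: mult.commute)
    finally show ?case .
  qed
  moreover have "0 < - ln s" using s by simp
  ultimately show ?thesis by blast
qed

lemma approval_prob_eq_pi_weight: "approval_prob m p = pi_weight (alts m) p"
  by (simp add: fun_eq_iff approval_prob_def pi_weight_def)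

lemma one_minus_prob_top_in_EJR:
  "1 - prob_top_in_EJR m k p n = iid_prob (pi_weight (alts m) p) n
     {P \<in> PiE {..<n} (\<lambda>_. Pow (alts m)). \<not> top_k m k p \<subseteq> EJR_plus m k n P}"
proof -
  define X where "X = PiE {..<n} (\<lambda>_. Pow (alts m))"
  define G where "G = {P \<in> X. top_k m k p \<subseteq> EJR_plus m k n P}"
  have fin: "finite (alts m)" by (simp add: alts_def)
  have "prob_top_in_EJR m k p n = iid_prob (pi_weight (alts m) p) n G"
    by (simp add: prob_top_in_EJR_def iid_prob_def approval_prob_eq_pi_weight
        atLeast0LessThan G_def X_def)
  moreover have "iid_prob (pi_weight (alts m) p) n X = 1"
    using iid_prob_PiE[OF finite_Pow_iff[THEN iffD2, OF fin]] sum_pi_weight[OF fin]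
    by (simp add: X_def)
  moreover have "{P \<in> X. \<not> top_k m k p \<subseteq> EJR_plus m k n P} = X - G"
    by (auto simp: G_def)
  moreover have "finite X" using fin by (simp add: X_def finite_PiE)
  ultimately show ?thesis
    by (simp add: iid_prob_def sum_diff G_def flip: X_def)
qed

definition violation_patterns ::
    "nat \<Rightarrow> nat \<Rightarrow> (nat \<Rightarrow> real) \<Rightarrow> (nat set \<times> nat \<times> nat) set" where
  "violation_patterns m k p = {(W, a, l). W \<in> top_k m k p \<and> a \<in> alts m - W \<and> l \<in> {1..k}}"

definition violation_event ::
    "nat \<Rightarrow> nat \<Rightarrow> nat \<Rightarrow> nat set \<times> nat \<times> nat \<Rightarrow> (nat \<Rightarrow> nat set) set" where
  "violation_event m k n =
     (\<lambda>(W, a, l). tail_event (Pow (alts m)) (blocking_ballots W a l) (real l / real k) n)"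

lemma finite_violation_patterns: "finite (violation_patterns m k p)"
proof (rule finite_subset)
  show "violation_patterns m k p \<subseteq> Pow (alts m) \<times> alts m \<times> {1..k}"
    by (auto simp: violation_patterns_def top_k_def)
qed (simp add: alts_def)

lemma violation_event_exponential:
  assumes "\<tau> \<in> violation_patterns m k p" "0 < k" "\<forall>i\<in>alts m. 0 \<le> p i \<and> p i < 1"
  shows "\<exists>r. 0 \<le> r \<and> r < 1 \<and> (\<forall>n. iid_prob (pi_weight (alts m) p) n (violation_event m k n \<tau>) \<le> r ^ n)"
proof -
  obtain W a l where \<tau>: "\<tau> = (W, a, l)" and W: "W \<in> top_k m k p" and a: "a \<in> alts m - W"
    and l: "l \<in> {1..k}"
    using assms(1) by (auto simp: violation_patterns_def)
  have fin: "finite (alts m)" by (simp add: alts_def)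
  have "W \<subseteq> alts m" "card W = k" "\<forall>i\<in>W. p a \<le> p i"
    using W a by (auto simp: top_k_def)
  then have "pi_expect (alts m) p (\<lambda>A. of_bool (A \<in> blocking_ballots W a l)) < real l / real k"
    using pi_expect_blocking_ballots_less[OF fin _ a assms(3)] assms(2) l by auto
  then show ?thesis
    unfolding \<tau> violation_event_def pi_expect_indicator[OF fin] prod.case
    using fin sum_pi_weight[OF fin] pi_weight_nonneg[of "alts m" p] assms(3)
    by (intro iid_prob_tail_event_exponential) (auto simp: less_imp_le)
qed

lemma EJR_plus_failure_in_violation_event:
  assumes "0 < k" "1 \<le> n" and P: "P \<in> PiE {..<n} (\<lambda>_. Pow (alts m))"
    and W: "W \<in> top_k m k p" "W \<notin> EJR_plus m k n P"
  shows "\<exists>\<tau>\<in>violation_patterns m k p. P \<in> violation_event m k n \<tau>"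
proof -
  obtain a l N' where a: "a \<in> alts m - W" and "1 \<le> l" and N': "N' \<subseteq> {0..<n}"
    and card_N': "real l * real n / real k \<le> real (card N')"
    and voters: "\<forall>j\<in>N'. a \<in> P j \<and> card (P j \<inter> W) < l"
    using W by (auto simp: EJR_plus_def top_k_def)
  have "card N' \<le> n" using N' by (metis card_atLeastLessThan card_mono finite_atLeastLessThan diff_zero)
  have "real l * real n \<le> real k * real (card N')"
    using card_N' \<open>0 < k\<close> by (simp add: field_simps)
  also have "\<dots> \<le> real k * real n"
    using \<open>card N' \<le> n\<close> by (intro mult_left_mono) auto
  finally have "real l * real n \<le> real k * real n" .
  then have "l \<le> k" using \<open>1 \<le> n\<close> by simp
  have "N' \<subseteq> {j\<in>{..<n}. P j \<in> blocking_ballots W a l}"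
    using N' voters by (auto simp: blocking_ballots_def)
  then have "card N' \<le> card {j\<in>{..<n}. P j \<in> blocking_ballots W a l}"
    by (intro card_mono) auto
  then have "P \<in> violation_event m k n (W, a, l)"
    using P card_N' by (simp add: violation_event_def tail_event_def field_simps)
  moreover have "(W, a, l) \<in> violation_patterns m k p"
    using W a \<open>1 \<le> l\<close> \<open>l \<le> k\<close> by (simp add: violation_patterns_def)
  ultimately show ?thesis by blast
qed

lemma one_minus_prob_top_in_EJR_le:
  assumes "0 < k" "1 \<le> n" "\<forall>i\<in>alts m. 0 \<le> p i \<and> p i \<le> 1"
  shows "1 - prob_top_in_EJR m k p n \<le>
    (\<Sum>\<tau>\<in>violation_patterns m k p. iid_prob (pi_weight (alts m) p) n (violation_event m k n \<tau>))"
proof -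
  let ?w = "pi_weight (alts m) p" and ?V = "violation_patterns m k p"
  let ?X = "PiE {..<n} (\<lambda>_. Pow (alts m))"
  have fin: "finite ?X" by (simp add: alts_def finite_PiE)
  have events: "violation_event m k n \<tau> \<subseteq> ?X" for \<tau>
    by (auto simp: violation_event_def tail_event_def split: prod.splits)
  have nonneg: "0 \<le> (\<Prod>j<n. ?w (P j))" if "P \<in> ?X" for P
    using assms(3) by (intro prod_nonneg pi_weight_nonneg) blast
  have failures:
    "{P \<in> ?X. \<not> top_k m k p \<subseteq> EJR_plus m k n P} \<subseteq> (\<Union>\<tau>\<in>?V. violation_event m k n \<tau>)"
  proof
    fix P assume "P \<in> {P \<in> ?X. \<not> top_k m k p \<subseteq> EJR_plus m k n P}"
    then obtain W where "P \<in> ?X" "W \<in> top_k m k p" "W \<notin> EJR_plus m k n P" by blast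
    from EJR_plus_failure_in_violation_event[OF assms(1,2) this]
    show "P \<in> (\<Union>\<tau>\<in>?V. violation_event m k n \<tau>)" by blast
  qed
  have union: "(\<Union>\<tau>\<in>?V. violation_event m k n \<tau>) \<subseteq> ?X"
    using events by blast
  have "1 - prob_top_in_EJR m k p n \<le> iid_prob ?w n (\<Union>\<tau>\<in>?V. violation_event m k n \<tau>)"
    unfolding one_minus_prob_top_in_EJR iid_prob_def
    by (rule sum_mono2[OF finite_subset[OF union fin] failures]) (rule nonneg, use union in blast)
  also have "\<dots> \<le> (\<Sum>\<tau>\<in>?V. iid_prob ?w n (violation_event m k n \<tau>))"
    unfolding iid_prob_def
    by (rule sum_UN_le[OF finite_violation_patterns finite_subset[OF events fin]])
      (rule nonneg, use union in blast)
  finally show ?thesis .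
qed

theorem theorem17:
  fixes m k :: nat and p :: "nat \<Rightarrow> real"
  assumes "0 < k" and "k < m"
    and "\<forall>i\<in>alts m. 0 < p i \<and> p i < 1"
  shows "\<exists>c>0. \<forall>\<^sub>F n in sequentially.
           1 - prob_top_in_EJR m k p n \<le> exp (- c * real n)"
proof -
  let ?V = "violation_patterns m k p" and ?w = "pi_weight (alts m) p"
  have p: "\<forall>i\<in>alts m. 0 \<le> p i \<and> p i < 1" using assms(3) by auto
  have "\<forall>\<tau>\<in>?V. \<exists>r. 0 \<le> r \<and> r < 1 \<and> (\<forall>n. iid_prob ?w n (violation_event m k n \<tau>) \<le> r ^ n)"
    using violation_event_exponential[OF _ assms(1) p] by blast
  from finite_uniform_geometric_bound[OF finite_violation_patterns this]
  obtain r where "0 \<le> r" "r < 1"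
    and r: "\<forall>\<tau>\<in>?V. \<forall>n. iid_prob ?w n (violation_event m k n \<tau>) \<le> r ^ n"
    by blast
  have bound: "1 - prob_top_in_EJR m k p n \<le> real (card ?V) * r ^ n" if "1 \<le> n" for n
  proof -
    have "1 - prob_top_in_EJR m k p n \<le> (\<Sum>\<tau>\<in>?V. iid_prob ?w n (violation_event m k n \<tau>))"
      by (rule one_minus_prob_top_in_EJR_le[OF assms(1) that]) (use p in auto)
    also have "\<dots> \<le> (\<Sum>\<tau>\<in>?V. r ^ n)"
      using r by (intro sum_mono) blast
    finally show ?thesis by simp
  qed
  obtain c where "c > 0" and "\<forall>\<^sub>F n in sequentially. real (card ?V) * r ^ n \<le> exp (- c * real n)"
    using geometric_le_exp_eventually[OF \<open>0 \<le> r\<close> \<open>r < 1\<close>] by blast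
  moreover from this(2) eventually_ge_at_top[of 1]
  have "\<forall>\<^sub>F n in sequentially. 1 - prob_top_in_EJR m k p n \<le> exp (- c * real n)"
    by eventually_elim (use bound in \<open>fastforce intro: order_trans\<close>)
  ultimately show ?thesis by blast
qed

end
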